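(* Let $H_\bullet,G_\bullet$ be braided crossed modules and let $E$ be a braided butterfly from $H_\bullet$ to $G_\bullet$, with maps $\kappa\colon H_1\to E$, $\imath\colon G_1\to E$, $\pi\colon E\to H_0$, $\jmath\colon E\to G_0$. (1) If the corresponding weak morphism $\mathscr H\to\mathscr G$ is essentially surjective, equivalently if $\jmath\colon E\to G_0$ is an epimorphism of sheaves, then $H_\bullet$ symmetric (resp. Picard) implies $G_\bullet$ symmetric (resp. Picard). (2) If $\mathscr H\to\mathscr G$ has trivial homotopy kernel, equivalently if $\kappa\colon H_1\to E$ is injective, then $G_\bullet$ symmetric (resp. Picard) implies $H_\bullet$ symmetric (resp. Picard).
   Context: $\mathcal S$ is a site with subcanonical topology; groups are sheaves of groups. A crossed module $[G_1\xrightarrow{\partial}G_0]$ (right action $g\mapsto g^x$, $\partial(g^x)=x^{-1}\partial(g)x$, $g_0^{\partial g_1}=g_1^{-1}g_0g_1$) is braided by a map $\{-,-\}\colon G_0\times G_0\to G_1$ with $\partial\{x,y\}=y^{-1}x^{-1}yx$, $\{x,yz\}=\{x,y\}^z\{x,z\}$, $\{xy,z\}=\{y,z\}\{x,z\}^y$, $\{x,\partial h\}=h^{-1}h^x$, $\{\partial g,y\}=(g^y)^{-1}g$; the associated gr-stack $\mathscr G=[G_1\to G_0]^\sim$ is then braided, with braiding $s_{X,Y}\colon X\otimes Y\to Y\otimes X$. A braided crossed module is symmetric (resp. Picard) if the braiding of its gr-stack satisfies $s_{Y,X}s_{X,Y}=\mathrm{id}$ for all $X,Y$ (resp. additionally $s_{X,X}=\mathrm{id}$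 for all $X$). A butterfly from $H_\bullet$ to $G_\bullet$ is a group $E$ with maps as in the claim such that $\pi\kappa=\partial_H$, $\jmath\imath=\partial_G$, $\jmath\kappa=1$, $1\to G_1\to E\to H_0\to1$ short exact, $\imath(g^{\jmath(e)})=e^{-1}\imath(g)e$, $\kappa(h^{\pi(e)})=e^{-1}\kappa(h)e$; it is braided if $\kappa\{\pi(x),\pi(y)\}_H\,\imath\{\jmath(x),\jmath(y)\}_G=y^{-1}x^{-1}yx$ for all $x,y\in E$. Its weak morphism is the additive functor $\mathscr H=[H_1\to H_0]^\sim\to\mathscr G$ given by $P^\sim\circ(Q^\sim)^{-1}$ with $Q=(\mathrm{pr}_1,\pi)$, $P=(\mathrm{pr}_2,\jmath)$ the strict morphisms from $[H_1\times G_1\xrightarrow{\kappa\cdot\imath}E]$. *)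

theory Defs
  imports "HOL-Algebra.Group"
begin

section \<open>Sites (Grothendieck topologies given by covering sieves)\<close>

record ('o,'m) site_data =
  Obj :: "'o set"
  Arr :: "'m set"
  Dom :: "'m \<Rightarrow> 'o"
  Cod :: "'m \<Rightarrow> 'o"
  Idm :: "'o \<Rightarrow> 'm"
  Cmp :: "'m \<Rightarrow> 'm \<Rightarrow> 'm"   (* Cmp f g = f \<circ> g, defined when Dom f = Cod g *)
  Cov :: "'o \<Rightarrow> 'm set set"

definition is_category :: "('o,'m,'z) site_data_scheme \<Rightarrow> bool" where
  "is_category C \<longleftrightarrow>
     (\<forall>f\<in>Arr C. Dom C f \<in> Obj C \<and> Cod C f \<in> Obj C) \<and>
     (\<forall>X\<in>Obj C. Idm C X \<in> Arr C \<and> Dom C (Idm C X) = X \<and> Cod C (Idm C X) = X) \<and>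
     (\<forall>f\<in>Arr C. \<forall>g\<in>Arr C. Dom C f = Cod C g \<longrightarrow>
        Cmp C f g \<in> Arr C \<and> Dom C (Cmp C f g) = Dom C g \<and> Cod C (Cmp C f g) = Cod C f) \<and>
     (\<forall>f\<in>Arr C. Cmp C f (Idm C (Dom C f)) = f \<and> Cmp C (Idm C (Cod C f)) f = f) \<and>
     (\<forall>f\<in>Arr C. \<forall>g\<in>Arr C. \<forall>h\<in>Arr C. Dom C f = Cod C g \<and> Dom C g = Cod C h \<longrightarrow>
        Cmp C (Cmp C f g) h = Cmp C f (Cmp C g h))"

definition arrows_into :: "('o,'m,'z) site_data_scheme \<Rightarrow> 'o \<Rightarrow> 'm set" where
  "arrows_into C U = {f\<in>Arr C. Cod C f = U}"

definition is_sieve :: "('o,'m,'z) site_data_scheme \<Rightarrow> 'o \<Rightarrow> 'm set \<Rightarrow> bool" where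
  "is_sieve C U S \<longleftrightarrow> S \<subseteq> arrows_into C U \<and>
     (\<forall>f\<in>S. \<forall>g\<in>Arr C. Cod C g = Dom C f \<longrightarrow> Cmp C f g \<in> S)"

definition pullback_sieve :: "('o,'m,'z) site_data_scheme \<Rightarrow> 'm \<Rightarrow> 'm set \<Rightarrow> 'm set" where
  "pullback_sieve C f S = {g\<in>Arr C. Cod C g = Dom C f \<and> Cmp C f g \<in> S}"

definition is_site :: "('o,'m,'z) site_data_scheme \<Rightarrow> bool" where
  "is_site C \<longleftrightarrow> is_category C \<and>
     (\<forall>U. U \<notin> Obj C \<longrightarrow> Cov C U = {}) \<and>
     (\<forall>U\<in>Obj C. \<forall>S\<in>Cov C U. is_sieve C U S) \<and>
     (\<forall>U\<in>Obj C. arrows_into C U \<in> Cov C U) \<and>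
     (\<forall>U\<in>Obj C. \<forall>S\<in>Cov C U. \<forall>f\<in>arrows_into C U. pullback_sieve C f S \<in> Cov C (Dom C f)) \<and>
     (\<forall>U\<in>Obj C. \<forall>S\<in>Cov C U. \<forall>R. is_sieve C U R \<and>
        (\<forall>f\<in>S. pullback_sieve C f R \<in> Cov C (Dom C f)) \<longrightarrow> R \<in> Cov C U)"

definition is_presheaf :: "('o,'m,'z) site_data_scheme \<Rightarrow> ('o \<Rightarrow> 'a set) \<Rightarrow> ('m \<Rightarrow> 'a \<Rightarrow> 'a) \<Rightarrow> bool" where
  "is_presheaf C F r \<longleftrightarrow>
     (\<forall>f\<in>Arr C. \<forall>x\<in>F (Cod C f). r f x \<in> F (Dom C f)) \<and>
     (\<forall>X\<in>Obj C. \<forall>x\<in>F X. r (Idm C X) x = x) \<and>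
     (\<forall>f\<in>Arr C. \<forall>g\<in>Arr C. Dom C f = Cod C g \<longrightarrow>
        (\<forall>x\<in>F (Cod C f). r (Cmp C f g) x = r g (r f x)))"

definition matching_family ::
  "('o,'m,'z) site_data_scheme \<Rightarrow> ('o \<Rightarrow> 'a set) \<Rightarrow> ('m \<Rightarrow> 'a \<Rightarrow> 'a) \<Rightarrow> 'm set \<Rightarrow> ('m \<Rightarrow> 'a) \<Rightarrow> bool" where
  "matching_family C F r S s \<longleftrightarrow>
     (\<forall>f\<in>S. s f \<in> F (Dom C f)) \<and>
     (\<forall>f\<in>S. \<forall>g\<in>Arr C. Cod C g = Dom C f \<longrightarrow> r g (s f) = s (Cmp C f g))"

definition is_sheaf :: "('o,'m,'z) site_data_scheme \<Rightarrow> ('o \<Rightarrow> 'a set) \<Rightarrow> ('m \<Rightarrow> 'a \<Rightarrow> 'a) \<Rightarrow> bool" where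
  "is_sheaf C F r \<longleftrightarrow> is_presheaf C F r \<and>
     (\<forall>U\<in>Obj C. \<forall>S\<in>Cov C U. \<forall>s. matching_family C F r S s \<longrightarrow>
        (\<exists>!x. x \<in> F U \<and> (\<forall>f\<in>S. r f x = s f)))"

definition subcanonical :: "('o,'m,'z) site_data_scheme \<Rightarrow> bool" where
  "subcanonical C \<longleftrightarrow> (\<forall>V\<in>Obj C.
     is_sheaf C (\<lambda>X. {h\<in>Arr C. Dom C h = X \<and> Cod C h = V}) (\<lambda>f h. Cmp C h f))"

definition is_group_sheaf :: "('o,'m,'z) site_data_scheme \<Rightarrow> ('o \<Rightarrow> 'a monoid) \<Rightarrow> ('m \<Rightarrow> 'a \<Rightarrow> 'a) \<Rightarrow> bool" where
  "is_group_sheaf C G r \<longleftrightarrow> (\<forall>U\<in>Obj C. group (G U)) \<and>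
     is_sheaf C (\<lambda>U. carrier (G U)) r \<and>
     (\<forall>f\<in>Arr C. r f \<in> hom (G (Cod C f)) (G (Dom C f)))"

definition is_sheaf_hom ::
  "('o,'m,'z) site_data_scheme \<Rightarrow> ('o \<Rightarrow> 'a monoid) \<Rightarrow> ('m \<Rightarrow> 'a \<Rightarrow> 'a) \<Rightarrow>
   ('o \<Rightarrow> 'b monoid) \<Rightarrow> ('m \<Rightarrow> 'b \<Rightarrow> 'b) \<Rightarrow> ('o \<Rightarrow> 'a \<Rightarrow> 'b) \<Rightarrow> bool" where
  "is_sheaf_hom C A rA B rB \<phi> \<longleftrightarrow>
     (\<forall>U\<in>Obj C. \<phi> U \<in> hom (A U) (B U)) \<and>
     (\<forall>f\<in>Arr C. \<forall>x\<in>carrier (A (Cod C f)). rB f (\<phi> (Cod C f) x) = \<phi> (Dom C f) (rA f x))"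

text \<open>Epimorphism of sheaves = local surjectivity.\<close>
definition sheaf_epi ::
  "('o,'m,'z) site_data_scheme \<Rightarrow> ('o \<Rightarrow> 'a monoid) \<Rightarrow>
   ('o \<Rightarrow> 'b monoid) \<Rightarrow> ('m \<Rightarrow> 'b \<Rightarrow> 'b) \<Rightarrow> ('o \<Rightarrow> 'a \<Rightarrow> 'b) \<Rightarrow> bool" where
  "sheaf_epi C A B rB \<phi> \<longleftrightarrow>
     (\<forall>U\<in>Obj C. \<forall>y\<in>carrier (B U). \<exists>S\<in>Cov C U. \<forall>f\<in>S.
        \<exists>x\<in>carrier (A (Dom C f)). \<phi> (Dom C f) x = rB f y)"

definition sheaf_mono :: "('o,'m,'z) site_data_scheme \<Rightarrow> ('o \<Rightarrow> 'a monoid) \<Rightarrow> ('o \<Rightarrow> 'a \<Rightarrow> 'b) \<Rightarrow> bool" where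
  "sheaf_mono C A \<phi> \<longleftrightarrow> (\<forall>U\<in>Obj C. inj_on (\<phi> U) (carrier (A U)))"

record ('o,'m,'a,'b) xmod =
  xG1 :: "'o \<Rightarrow> 'a monoid"
  xr1 :: "'m \<Rightarrow> 'a \<Rightarrow> 'a"
  xG0 :: "'o \<Rightarrow> 'b monoid"
  xr0 :: "'m \<Rightarrow> 'b \<Rightarrow> 'b"
  xd  :: "'o \<Rightarrow> 'a \<Rightarrow> 'b"
  xact :: "'o \<Rightarrow> 'a \<Rightarrow> 'b \<Rightarrow> 'a"         (* xact U g x = g^x (right action) *)
  xbr :: "'o \<Rightarrow> 'b \<Rightarrow> 'b \<Rightarrow> 'a"

definition crossed_module :: "('o,'m,'z) site_data_scheme \<Rightarrow> ('o,'m,'a,'b) xmod \<Rightarrow> bool" where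
  "crossed_module C X \<longleftrightarrow>
     is_group_sheaf C (xG1 X) (xr1 X) \<and> is_group_sheaf C (xG0 X) (xr0 X) \<and>
     is_sheaf_hom C (xG1 X) (xr1 X) (xG0 X) (xr0 X) (xd X) \<and>
     (\<forall>f\<in>Arr C. \<forall>g\<in>carrier (xG1 X (Cod C f)). \<forall>x\<in>carrier (xG0 X (Cod C f)).
        xr1 X f (xact X (Cod C f) g x) = xact X (Dom C f) (xr1 X f g) (xr0 X f x)) \<and>
     (\<forall>U\<in>Obj C.
       (\<forall>g\<in>carrier (xG1 X U). \<forall>x\<in>carrier (xG0 X U). xact X U g x \<in> carrier (xG1 X U)) \<and>
       (\<forall>g\<in>carrier (xG1 X U). xact X U g \<one>\<^bsub>xG0 X U\<^esub> = g) \<and>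
       (\<forall>g\<in>carrier (xG1 X U). \<forall>x\<in>carrier (xG0 X U). \<forall>y\<in>carrier (xG0 X U).
          xact X U g (x \<otimes>\<^bsub>xG0 X U\<^esub> y) = xact X U (xact X U g x) y) \<and>
       (\<forall>g\<in>carrier (xG1 X U). \<forall>h\<in>carrier (xG1 X U). \<forall>x\<in>carrier (xG0 X U).
          xact X U (g \<otimes>\<^bsub>xG1 X U\<^esub> h) x = xact X U g x \<otimes>\<^bsub>xG1 X U\<^esub> xact X U h x) \<and>
       (\<forall>g\<in>carrier (xG1 X U). \<forall>x\<in>carrier (xG0 X U).
          xd X U (xact X U g x) = inv\<^bsub>xG0 X U\<^esub> x \<otimes>\<^bsub>xG0 X U\<^esub> xd X U g \<otimes>\<^bsub>xG0 X U\<^esub> x) \<and>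
       (\<forall>g0\<in>carrier (xG1 X U). \<forall>g1\<in>carrier (xG1 X U).
          xact X U g0 (xd X U g1) = inv\<^bsub>xG1 X U\<^esub> g1 \<otimes>\<^bsub>xG1 X U\<^esub> g0 \<otimes>\<^bsub>xG1 X U\<^esub> g1))"

definition braided_crossed_module :: "('o,'m,'z) site_data_scheme \<Rightarrow> ('o,'m,'a,'b) xmod \<Rightarrow> bool" where
  "braided_crossed_module C X \<longleftrightarrow> crossed_module C X \<and>
     (\<forall>f\<in>Arr C. \<forall>x\<in>carrier (xG0 X (Cod C f)). \<forall>y\<in>carrier (xG0 X (Cod C f)).
        xr1 X f (xbr X (Cod C f) x y) = xbr X (Dom C f) (xr0 X f x) (xr0 X f y)) \<and>
     (\<forall>U\<in>Obj C.
       (\<forall>x\<in>carrier (xG0 X U). \<forall>y\<in>carrier (xG0 X U). xbr X U x y \<in> carrier (xG1 X U)) \<and>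
       (\<forall>x\<in>carrier (xG0 X U). \<forall>y\<in>carrier (xG0 X U).
          xd X U (xbr X U x y) = inv\<^bsub>xG0 X U\<^esub> y \<otimes>\<^bsub>xG0 X U\<^esub> inv\<^bsub>xG0 X U\<^esub> x
                                 \<otimes>\<^bsub>xG0 X U\<^esub> y \<otimes>\<^bsub>xG0 X U\<^esub> x) \<and>
       (\<forall>x\<in>carrier (xG0 X U). \<forall>y\<in>carrier (xG0 X U). \<forall>z\<in>carrier (xG0 X U).
          xbr X U x (y \<otimes>\<^bsub>xG0 X U\<^esub> z) = xact X U (xbr X U x y) z \<otimes>\<^bsub>xG1 X U\<^esub> xbr X U x z) \<and>
       (\<forall>x\<in>carrier (xG0 X U). \<forall>y\<in>carrier (xG0 X U). \<forall>z\<in>carrier (xG0 X U).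
          xbr X U (x \<otimes>\<^bsub>xG0 X U\<^esub> y) z = xbr X U y z \<otimes>\<^bsub>xG1 X U\<^esub> xact X U (xbr X U x z) y) \<and>
       (\<forall>x\<in>carrier (xG0 X U). \<forall>h\<in>carrier (xG1 X U).
          xbr X U x (xd X U h) = inv\<^bsub>xG1 X U\<^esub> h \<otimes>\<^bsub>xG1 X U\<^esub> xact X U h x) \<and>
       (\<forall>g\<in>carrier (xG1 X U). \<forall>y\<in>carrier (xG0 X U).
          xbr X U (xd X U g) y = inv\<^bsub>xG1 X U\<^esub> (xact X U g y) \<otimes>\<^bsub>xG1 X U\<^esub> g))"

text \<open>Over an object U, the prestack [G1 \<rightarrow> G0] has objects x \<in> G0(U) and morphisms
  (x, g) : x \<rightarrow> x \<partial>(g) with g \<in> G1(U); composition of (x,g) followed by (x\<partial>g, g') is (x, g g').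
  The braiding s_{x,y} : xy \<rightarrow> yx is the morphism (xy, {x,y}).  The gr-stack is the
  stackification; since every object is locally of this form and equality of morphisms is
  local, the identities s_{Y,X}s_{X,Y} = id and s_{X,X} = id hold in the stack iff they hold
  for all sections x, y over all U here.\<close>

definition pstk_id :: "('o,'m,'a,'b) xmod \<Rightarrow> 'o \<Rightarrow> 'b \<Rightarrow> 'b \<times> 'a" where
  "pstk_id X U x = (x, \<one>\<^bsub>xG1 X U\<^esub>)"

definition pstk_comp :: "('o,'m,'a,'b) xmod \<Rightarrow> 'o \<Rightarrow> 'b \<times> 'a \<Rightarrow> 'b \<times> 'a \<Rightarrow> 'b \<times> 'a" where
  "pstk_comp X U \<alpha> \<beta> = (fst \<alpha>, snd \<alpha> \<otimes>\<^bsub>xG1 X U\<^esub> snd \<beta>)"  (* \<alpha> first, then \<beta> *)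

definition pstk_braiding :: "('o,'m,'a,'b) xmod \<Rightarrow> 'o \<Rightarrow> 'b \<Rightarrow> 'b \<Rightarrow> 'b \<times> 'a" where
  "pstk_braiding X U x y = (x \<otimes>\<^bsub>xG0 X U\<^esub> y, xbr X U x y)"

definition symmetric_xmod :: "('o,'m,'z) site_data_scheme \<Rightarrow> ('o,'m,'a,'b) xmod \<Rightarrow> bool" where
  "symmetric_xmod C X \<longleftrightarrow> (\<forall>U\<in>Obj C. \<forall>x\<in>carrier (xG0 X U). \<forall>y\<in>carrier (xG0 X U).
     pstk_comp X U (pstk_braiding X U x y) (pstk_braiding X U y x)
       = pstk_id X U (x \<otimes>\<^bsub>xG0 X U\<^esub> y))"

definition picard_xmod :: "('o,'m,'z) site_data_scheme \<Rightarrow> ('o,'m,'a,'b) xmod \<Rightarrow> bool" where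
  "picard_xmod C X \<longleftrightarrow> symmetric_xmod C X \<and>
     (\<forall>U\<in>Obj C. \<forall>x\<in>carrier (xG0 X U).
        pstk_braiding X U x x = pstk_id X U (x \<otimes>\<^bsub>xG0 X U\<^esub> x))"

record ('o,'m,'e,'h1,'h0,'g1,'g0) butterfly =
  bE :: "'o \<Rightarrow> 'e monoid"
  brE :: "'m \<Rightarrow> 'e \<Rightarrow> 'e"
  bkap :: "'o \<Rightarrow> 'h1 \<Rightarrow> 'e"
  biot :: "'o \<Rightarrow> 'g1 \<Rightarrow> 'e"
  bpi :: "'o \<Rightarrow> 'e \<Rightarrow> 'h0"
  bj :: "'o \<Rightarrow> 'e \<Rightarrow> 'g0"

definition is_butterfly ::
  "('o,'m,'z) site_data_scheme \<Rightarrow> ('o,'m,'h1,'h0) xmod \<Rightarrow> ('o,'m,'g1,'g0) xmod \<Rightarrow>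
   ('o,'m,'e,'h1,'h0,'g1,'g0) butterfly \<Rightarrow> bool" where
  "is_butterfly C H G B \<longleftrightarrow>
     is_group_sheaf C (bE B) (brE B) \<and>
     is_sheaf_hom C (xG1 H) (xr1 H) (bE B) (brE B) (bkap B) \<and>
     is_sheaf_hom C (xG1 G) (xr1 G) (bE B) (brE B) (biot B) \<and>
     is_sheaf_hom C (bE B) (brE B) (xG0 H) (xr0 H) (bpi B) \<and>
     is_sheaf_hom C (bE B) (brE B) (xG0 G) (xr0 G) (bj B) \<and>
     sheaf_mono C (xG1 G) (biot B) \<and>
     sheaf_epi C (bE B) (xG0 H) (xr0 H) (bpi B) \<and>
     (\<forall>U\<in>Obj C.
       (\<forall>h\<in>carrier (xG1 H U). bpi B U (bkap B U h) = xd H U h) \<and>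
       (\<forall>g\<in>carrier (xG1 G U). bj B U (biot B U g) = xd G U g) \<and>
       (\<forall>h\<in>carrier (xG1 H U). bj B U (bkap B U h) = \<one>\<^bsub>xG0 G U\<^esub>) \<and>
       {e\<in>carrier (bE B U). bpi B U e = \<one>\<^bsub>xG0 H U\<^esub>} = biot B U ` carrier (xG1 G U) \<and>
       (\<forall>g\<in>carrier (xG1 G U). \<forall>e\<in>carrier (bE B U).
          biot B U (xact G U g (bj B U e)) = inv\<^bsub>bE B U\<^esub> e \<otimes>\<^bsub>bE B U\<^esub> biot B U g \<otimes>\<^bsub>bE B U\<^esub> e) \<and>
       (\<forall>h\<in>carrier (xG1 H U). \<forall>e\<in>carrier (bE B U).
          bkap B U (xact H U h (bpi B U e)) = inv\<^bsub>bE B U\<^esub> e \<otimes>\<^bsub>bE B U\<^esub> bkap B U h \<otimes>\<^bsub>bE B U\<^esub> e))"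

definition is_braided_butterfly ::
  "('o,'m,'z) site_data_scheme \<Rightarrow> ('o,'m,'h1,'h0) xmod \<Rightarrow> ('o,'m,'g1,'g0) xmod \<Rightarrow>
   ('o,'m,'e,'h1,'h0,'g1,'g0) butterfly \<Rightarrow> bool" where
  "is_braided_butterfly C H G B \<longleftrightarrow> is_butterfly C H G B \<and>
     (\<forall>U\<in>Obj C. \<forall>x\<in>carrier (bE B U). \<forall>y\<in>carrier (bE B U).
        bkap B U (xbr H U (bpi B U x) (bpi B U y)) \<otimes>\<^bsub>bE B U\<^esub> biot B U (xbr G U (bj B U x) (bj B U y))
        = inv\<^bsub>bE B U\<^esub> y \<otimes>\<^bsub>bE B U\<^esub> inv\<^bsub>bE B U\<^esub> x \<otimes>\<^bsub>bE B U\<^esub> y \<otimes>\<^bsub>bE B U\<^esub> x)"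

end

theory Submission
  imports Defs "HOL-Algebra.Coset"
begin

text \<open>In the butterfly \<open>E\<close> the braiding condition reads
  \<open>\<kappa>{\<pi>x,\<pi>y} \<imath>{\<jmath>x,\<jmath>y} = [y,x]\<close>. The images of \<open>\<kappa>\<close> and \<open>\<imath>\<close> commute, so
  multiplying the instances for \<open>(x,y)\<close> and \<open>(y,x)\<close> gives
  \<open>\<kappa>({\<pi>x,\<pi>y}{\<pi>y,\<pi>x}) \<imath>({\<jmath>x,\<jmath>y}{\<jmath>y,\<jmath>x}) = 1\<close>, and \<open>x = y\<close> gives
  \<open>\<kappa>{\<pi>x,\<pi>x} \<imath>{\<jmath>x,\<jmath>x} = 1\<close>. As \<open>\<imath>\<close> is always injective, triviality of these
  invariants for \<open>H\<close> forces it for \<open>G\<close> on sections in the image of \<open>\<jmath>\<close>; conversely when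
  \<open>\<kappa>\<close> is injective, on the image of \<open>\<pi>\<close>. The invariants are natural and \<open>G\<^sub>1\<close>, \<open>H\<^sub>1\<close> are
  separated, so local surjectivity of \<open>\<jmath>\<close> (resp. of \<open>\<pi>\<close>, which holds for every butterfly)
  extends triviality to all sections.\<close>

lemma site_arrow_objects:
  assumes "is_site C" and "f \<in> Arr C"
  shows "Dom C f \<in> Obj C" and "Cod C f \<in> Obj C"
  using assms unfolding is_site_def is_category_def by auto

lemma covering_sieve_arrow:
  assumes site: "is_site C" and S: "S \<in> Cov C U" and f: "f \<in> S"
  shows "f \<in> Arr C" and "Cod C f = U" and "Dom C f \<in> Obj C"
proof -
  have U: "U \<in> Obj C" using site S unfolding is_site_def by auto
  then have "is_sieve C U S" using site S unfolding is_site_def by auto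
  then show f_arr: "f \<in> Arr C" and "Cod C f = U"
    using f unfolding is_sieve_def arrows_into_def by auto
  show "Dom C f \<in> Obj C" using site_arrow_objects(1)[OF site f_arr] .
qed

lemma group_sheaf_eq_one_if_locally_one:
  assumes site: "is_site C" and gs: "is_group_sheaf C G r" and S: "S \<in> Cov C U"
    and z: "z \<in> carrier (G U)" and local_one: "\<And>f. f \<in> S \<Longrightarrow> r f z = \<one>\<^bsub>G (Dom C f)\<^esub>"
  shows "z = \<one>\<^bsub>G U\<^esub>"
proof -
  have U: "U \<in> Obj C" using site S unfolding is_site_def by auto
  have restr_one: "r g \<one>\<^bsub>G (Cod C g)\<^esub> = \<one>\<^bsub>G (Dom C g)\<^esub>" if g: "g \<in> Arr C" for g
    using gs g hom_one site_arrow_objects[OF site g] unfolding is_group_sheaf_def by metis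
  have one_closed: "\<one>\<^bsub>G V\<^esub> \<in> carrier (G V)" if "V \<in> Obj C" for V
    using gs that unfolding is_group_sheaf_def by (simp add: group.is_monoid monoid.one_closed)
  have "matching_family C (\<lambda>V. carrier (G V)) r S (\<lambda>f. \<one>\<^bsub>G (Dom C f)\<^esub>)"
    unfolding matching_family_def
  proof (intro conjI ballI impI)
    fix f assume "f \<in> S"
    then show "\<one>\<^bsub>G (Dom C f)\<^esub> \<in> carrier (G (Dom C f))"
      using covering_sieve_arrow[OF site S] one_closed by blast
  next
    fix f g assume f: "f \<in> S" and g: "g \<in> Arr C" and gf: "Cod C g = Dom C f"
    have "Dom C (Cmp C f g) = Dom C g"
      using site f g gf covering_sieve_arrow[OF site S f] unfolding is_site_def is_category_def by auto
    then show "r g \<one>\<^bsub>G (Dom C f)\<^esub> = \<one>\<^bsub>G (Dom C (Cmp C f g))\<^esub>"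
      using restr_one[OF g] gf by simp
  qed
  then have "\<exists>!x. x \<in> carrier (G U) \<and> (\<forall>f\<in>S. r f x = \<one>\<^bsub>G (Dom C f)\<^esub>)"
    using gs U S unfolding is_group_sheaf_def is_sheaf_def by auto
  moreover have "\<forall>f\<in>S. r f \<one>\<^bsub>G U\<^esub> = \<one>\<^bsub>G (Dom C f)\<^esub>"
    using restr_one covering_sieve_arrow[OF site S] by metis
  ultimately show ?thesis using z local_one one_closed[OF U] by metis
qed

text \<open>The parameter \<open>p\<close>, taken from a family \<open>P\<close> stable under restriction, lets the lemma be
  applied one variable at a time to natural operations of several arguments.\<close>

lemma natural_map_eq_one_if_eq_one_on_image:
  assumes site: "is_site C" and gs: "is_group_sheaf C A rA"
    and epi: "sheaf_epi C E B rB \<phi>"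
    and P_restr: "\<And>f p. f \<in> Arr C \<Longrightarrow> p \<in> P (Cod C f) \<Longrightarrow> rP f p \<in> P (Dom C f)"
    and t_closed: "\<And>V x p. V \<in> Obj C \<Longrightarrow> x \<in> carrier (B V) \<Longrightarrow> p \<in> P V \<Longrightarrow>
                     t V x p \<in> carrier (A V)"
    and t_natural: "\<And>f x p. f \<in> Arr C \<Longrightarrow> x \<in> carrier (B (Cod C f)) \<Longrightarrow> p \<in> P (Cod C f) \<Longrightarrow>
                     rA f (t (Cod C f) x p) = t (Dom C f) (rB f x) (rP f p)"
    and on_image: "\<And>V a p. V \<in> Obj C \<Longrightarrow> a \<in> carrier (E V) \<Longrightarrow> p \<in> P V \<Longrightarrow>
                     t V (\<phi> V a) p = \<one>\<^bsub>A V\<^esub>"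
    and U: "U \<in> Obj C" and x: "x \<in> carrier (B U)" and p: "p \<in> P U"
  shows "t U x p = \<one>\<^bsub>A U\<^esub>"
proof -
  obtain S where S: "S \<in> Cov C U"
    and lift: "\<forall>f\<in>S. \<exists>a\<in>carrier (E (Dom C f)). \<phi> (Dom C f) a = rB f x"
    using epi U x unfolding sheaf_epi_def by blast
  show ?thesis
  proof (rule group_sheaf_eq_one_if_locally_one[OF site gs S t_closed[OF U x p]])
    fix f assume f: "f \<in> S"
    note f_props = covering_sieve_arrow[OF site S f]
    obtain a where a: "a \<in> carrier (E (Dom C f))" and "\<phi> (Dom C f) a = rB f x"
      using lift f by blast
    then show "rA f (t U x p) = \<one>\<^bsub>A (Dom C f)\<^esub>"
      using t_natural[of f x p] on_image[OF f_props(3) a] P_restr[of f p] f_props x p by auto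
  qed
qed

definition braiding_square :: "('o,'m,'a,'b) xmod \<Rightarrow> 'o \<Rightarrow> 'b \<Rightarrow> 'b \<Rightarrow> 'a" where
  "braiding_square X U x y = xbr X U x y \<otimes>\<^bsub>xG1 X U\<^esub> xbr X U y x"

lemma symmetric_xmod_iff_braiding_square:
  "symmetric_xmod C X \<longleftrightarrow> (\<forall>U\<in>Obj C. \<forall>x\<in>carrier (xG0 X U). \<forall>y\<in>carrier (xG0 X U).
     braiding_square X U x y = \<one>\<^bsub>xG1 X U\<^esub>)"
  unfolding symmetric_xmod_def pstk_comp_def pstk_braiding_def pstk_id_def braiding_square_def
  by simp

lemma picard_xmod_iff:
  "picard_xmod C X \<longleftrightarrow> symmetric_xmod C X \<and> (\<forall>U\<in>Obj C. \<forall>x\<in>carrier (xG0 X U).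
     xbr X U x x = \<one>\<^bsub>xG1 X U\<^esub>)"
  unfolding picard_xmod_def pstk_braiding_def pstk_id_def by simp

context
  fixes C :: "('o,'m,'z) site_data_scheme" and X :: "('o,'m,'a,'b) xmod"
  assumes site: "is_site C" and braided: "braided_crossed_module C X"
begin

lemma braided_xmod_group_sheaves:
  "is_group_sheaf C (xG1 X) (xr1 X)" "is_group_sheaf C (xG0 X) (xr0 X)"
  using braided unfolding braided_crossed_module_def crossed_module_def by auto

lemma braided_xmod_group1: "U \<in> Obj C \<Longrightarrow> group (xG1 X U)"
  using braided_xmod_group_sheaves(1) unfolding is_group_sheaf_def by auto

lemma braided_xmod_restr0_closed:
  "f \<in> Arr C \<Longrightarrow> x \<in> carrier (xG0 X (Cod C f)) \<Longrightarrow> xr0 X f x \<in> carrier (xG0 X (Dom C f))"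
  using braided_xmod_group_sheaves(2) unfolding is_group_sheaf_def is_sheaf_def is_presheaf_def
  by auto

lemma braiding_closed:
  "U \<in> Obj C \<Longrightarrow> x \<in> carrier (xG0 X U) \<Longrightarrow> y \<in> carrier (xG0 X U) \<Longrightarrow>
     xbr X U x y \<in> carrier (xG1 X U)"
  using braided unfolding braided_crossed_module_def by auto

lemma braiding_natural:
  "f \<in> Arr C \<Longrightarrow> x \<in> carrier (xG0 X (Cod C f)) \<Longrightarrow> y \<in> carrier (xG0 X (Cod C f)) \<Longrightarrow>
     xr1 X f (xbr X (Cod C f) x y) = xbr X (Dom C f) (xr0 X f x) (xr0 X f y)"
  using braided unfolding braided_crossed_module_def by auto

lemma braiding_square_closed:
  "U \<in> Obj C \<Longrightarrow> x \<in> carrier (xG0 X U) \<Longrightarrow> y \<in> carrier (xG0 X U) \<Longrightarrow>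
     braiding_square X U x y \<in> carrier (xG1 X U)"
  unfolding braiding_square_def
  by (simp add: braiding_closed braided_xmod_group1 group.is_monoid monoid.m_closed)

lemma braiding_square_natural:
  assumes f: "f \<in> Arr C" and x: "x \<in> carrier (xG0 X (Cod C f))" and y: "y \<in> carrier (xG0 X (Cod C f))"
  shows "xr1 X f (braiding_square X (Cod C f) x y) = braiding_square X (Dom C f) (xr0 X f x) (xr0 X f y)"
proof -
  have "xr1 X f \<in> hom (xG1 X (Cod C f)) (xG1 X (Dom C f))"
    using braided_xmod_group_sheaves(1) f unfolding is_group_sheaf_def by auto
  then show ?thesis unfolding braiding_square_def
    using hom_mult braiding_closed braiding_natural site_arrow_objects[OF site f] f x y by metis
qed

lemma braiding_square_swap:
  assumes U: "U \<in> Obj C" and x: "x \<in> carrier (xG0 X U)" and y: "y \<in> carrier (xG0 X U)"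
    and "braiding_square X U x y = \<one>\<^bsub>xG1 X U\<^esub>"
  shows "braiding_square X U y x = \<one>\<^bsub>xG1 X U\<^esub>"
  using assms group.inv_comm[OF braided_xmod_group1[OF U] _ braiding_closed[OF U x y] braiding_closed[OF U y x]]
  unfolding braiding_square_def by simp

text \<open>Local surjectivity reduces symmetry to sections in the image of \<open>\<phi>\<close>, in two rounds:
  first in the left variable with the right one in the image, then, after swapping, in the right
  variable.\<close>

lemma symmetric_xmod_if_braiding_square_one_on_image:
  assumes gsE: "is_group_sheaf C E rE"
    and \<phi>_hom: "is_sheaf_hom C E rE (xG0 X) (xr0 X) \<phi>"
    and epi: "sheaf_epi C E (xG0 X) (xr0 X) \<phi>"
    and on_image: "\<And>V a c. V \<in> Obj C \<Longrightarrow> a \<in> carrier (E V) \<Longrightarrow> c \<in> carrier (E V) \<Longrightarrow>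
                     braiding_square X V (\<phi> V a) (\<phi> V c) = \<one>\<^bsub>xG1 X V\<^esub>"
  shows "symmetric_xmod C X"
proof -
  let ?img = "\<lambda>V. \<phi> V ` carrier (E V)"
  have \<phi>_closed: "\<phi> V a \<in> carrier (xG0 X V)" if "V \<in> Obj C" "a \<in> carrier (E V)" for V a
    using \<phi>_hom that unfolding is_sheaf_hom_def hom_def by auto
  have img_restr: "xr0 X f y \<in> ?img (Dom C f)" if f: "f \<in> Arr C" and y: "y \<in> ?img (Cod C f)" for f y
  proof -
    obtain a where a: "a \<in> carrier (E (Cod C f))" and "y = \<phi> (Cod C f) a" using y by blast
    then have "xr0 X f y = \<phi> (Dom C f) (rE f a)"
      using \<phi>_hom f unfolding is_sheaf_hom_def by auto
    moreover have "rE f a \<in> carrier (E (Dom C f))"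
      using gsE f a unfolding is_group_sheaf_def is_sheaf_def is_presheaf_def by auto
    ultimately show ?thesis by blast
  qed
  have img_sub: "y \<in> carrier (xG0 X V)" if "V \<in> Obj C" "y \<in> ?img V" for V y
    using that \<phi>_closed by blast
  have right_in_image: "braiding_square X U x y = \<one>\<^bsub>xG1 X U\<^esub>"
    if "U \<in> Obj C" "x \<in> carrier (xG0 X U)" "y \<in> ?img U" for U x y
    by (rule natural_map_eq_one_if_eq_one_on_image[OF site braided_xmod_group_sheaves(1) epi,
          where P = ?img and rP = "xr0 X" and t = "braiding_square X"])
       (use that img_restr img_sub braiding_square_closed braiding_square_natural on_image
          site_arrow_objects[OF site] in auto)
  have "braiding_square X U x y = \<one>\<^bsub>xG1 X U\<^esub>"
    if "U \<in> Obj C" "x \<in> carrier (xG0 X U)" "y \<in> carrier (xG0 X U)" for U x y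
    by (rule natural_map_eq_one_if_eq_one_on_image[OF site braided_xmod_group_sheaves(1) epi,
          where P = "\<lambda>V. carrier (xG0 X V)" and rP = "xr0 X" and t = "\<lambda>V y x. braiding_square X V x y"])
       (use that braided_xmod_restr0_closed braiding_square_closed braiding_square_natural
          right_in_image braiding_square_swap \<phi>_closed in auto)
  then show ?thesis unfolding symmetric_xmod_iff_braiding_square by blast
qed

lemma braiding_diagonal_one_if_one_on_image:
  assumes epi: "sheaf_epi C E (xG0 X) (xr0 X) \<phi>"
    and on_image: "\<And>V a. V \<in> Obj C \<Longrightarrow> a \<in> carrier (E V) \<Longrightarrow> xbr X V (\<phi> V a) (\<phi> V a) = \<one>\<^bsub>xG1 X V\<^esub>"
    and U: "U \<in> Obj C" and x: "x \<in> carrier (xG0 X U)"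
  shows "xbr X U x x = \<one>\<^bsub>xG1 X U\<^esub>"
  by (rule natural_map_eq_one_if_eq_one_on_image[OF site braided_xmod_group_sheaves(1) epi,
        where P = "\<lambda>_. {()}" and rP = "\<lambda>_. id" and t = "\<lambda>V x _. xbr X V x x", OF _ _ _ _ U x])
     (use braiding_closed braiding_natural on_image in auto)

end

lemma (in group) swapped_commutators_mult:
  assumes "a \<in> carrier G" and "b \<in> carrier G"
  shows "(inv b \<otimes> inv a \<otimes> b \<otimes> a) \<otimes> (inv a \<otimes> inv b \<otimes> a \<otimes> b) = \<one>"
  using assms by (simp add: m_assoc flip: m_assoc[of a "inv a"] m_assoc[of b "inv b"] m_assoc[of "inv a" a])

lemma hom_images_mult_eq_one_cancel:
  assumes groups: "group E" "group A" "group B"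
    and k: "k \<in> hom A E" and i: "i \<in> hom B E"
    and x: "x \<in> carrier A" and y: "y \<in> carrier B"
    and prod: "k x \<otimes>\<^bsub>E\<^esub> i y = \<one>\<^bsub>E\<^esub>"
  shows "x = \<one>\<^bsub>A\<^esub> \<Longrightarrow> inj_on i (carrier B) \<Longrightarrow> y = \<one>\<^bsub>B\<^esub>"
    and "y = \<one>\<^bsub>B\<^esub> \<Longrightarrow> inj_on k (carrier A) \<Longrightarrow> x = \<one>\<^bsub>A\<^esub>"
proof -
  have kx: "k x \<in> carrier E" and iy: "i y \<in> carrier E"
    using k i x y unfolding hom_def by auto
  show "y = \<one>\<^bsub>B\<^esub>" if "x = \<one>\<^bsub>A\<^esub>" and "inj_on i (carrier B)"
  proof -
    have "i y = \<one>\<^bsub>E\<^esub>" using prod that(1) hom_one[OF k groups(2,1)] iy groups(1)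
      by (simp add: group.is_monoid)
    then show ?thesis using inj_on_one_iff'[OF i groups(3,1)] that(2) y by blast
  qed
  show "x = \<one>\<^bsub>A\<^esub>" if "y = \<one>\<^bsub>B\<^esub>" and "inj_on k (carrier A)"
  proof -
    have "k x = \<one>\<^bsub>E\<^esub>" using prod that(1) hom_one[OF i groups(3,1)] kx groups(1)
      by (simp add: group.is_monoid)
    then show ?thesis using inj_on_one_iff'[OF k groups(2,1)] that(2) x by blast
  qed
qed

context
  fixes C :: "('o,'m,'z) site_data_scheme"
    and H :: "('o,'m,'h1,'h0) xmod" and G :: "('o,'m,'g1,'g0) xmod"
    and B :: "('o,'m,'e,'h1,'h0,'g1,'g0) butterfly"
  assumes site: "is_site C"
    and braided_H: "braided_crossed_module C H" and braided_G: "braided_crossed_module C G"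
    and braided_B: "is_braided_butterfly C H G B"
begin

lemma butterfly: "is_butterfly C H G B"
  using braided_B unfolding is_braided_butterfly_def by auto

lemma butterfly_sheaf_maps:
  "is_group_sheaf C (bE B) (brE B)"
  "is_sheaf_hom C (bE B) (brE B) (xG0 H) (xr0 H) (bpi B)"
  "is_sheaf_hom C (bE B) (brE B) (xG0 G) (xr0 G) (bj B)"
  "sheaf_epi C (bE B) (xG0 H) (xr0 H) (bpi B)"
  using butterfly unfolding is_butterfly_def by auto

lemma butterfly_group: "U \<in> Obj C \<Longrightarrow> group (bE B U)"
  using butterfly unfolding is_butterfly_def is_group_sheaf_def by auto

lemma butterfly_homs:
  assumes "U \<in> Obj C"
  shows "bkap B U \<in> hom (xG1 H U) (bE B U)" and "biot B U \<in> hom (xG1 G U) (bE B U)"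
    and "bpi B U \<in> hom (bE B U) (xG0 H U)" and "bj B U \<in> hom (bE B U) (xG0 G U)"
  using butterfly assms unfolding is_butterfly_def is_sheaf_hom_def by auto

lemma butterfly_carriers:
  assumes "U \<in> Obj C"
  shows "h \<in> carrier (xG1 H U) \<Longrightarrow> bkap B U h \<in> carrier (bE B U)"
    and "g \<in> carrier (xG1 G U) \<Longrightarrow> biot B U g \<in> carrier (bE B U)"
    and "e \<in> carrier (bE B U) \<Longrightarrow> bpi B U e \<in> carrier (xG0 H U)"
    and "e \<in> carrier (bE B U) \<Longrightarrow> bj B U e \<in> carrier (xG0 G U)"
  using butterfly_homs[OF assms] unfolding hom_def by auto

text \<open>The image of \<open>\<kappa>\<close> lies in the kernel of \<open>\<jmath>\<close>, which acts trivially on the image of \<open>\<imath>\<close>.\<close>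

lemma butterfly_kappa_iota_commute:
  assumes U: "U \<in> Obj C" and h: "h \<in> carrier (xG1 H U)" and g: "g \<in> carrier (xG1 G U)"
  shows "bkap B U h \<otimes>\<^bsub>bE B U\<^esub> biot B U g = biot B U g \<otimes>\<^bsub>bE B U\<^esub> bkap B U h"
proof -
  interpret E: group "bE B U" using butterfly_group[OF U] .
  note k = butterfly_carriers(1)[OF U h] and i = butterfly_carriers(2)[OF U g]
  have "biot B U g = biot B U (xact G U g (bj B U (bkap B U h)))"
    using butterfly braided_G U h g
    unfolding is_butterfly_def braided_crossed_module_def crossed_module_def by auto
  also have "\<dots> = inv\<^bsub>bE B U\<^esub> bkap B U h \<otimes>\<^bsub>bE B U\<^esub> biot B U g \<otimes>\<^bsub>bE B U\<^esub> bkap B U h"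
    using butterfly U g k unfolding is_butterfly_def by auto
  finally have "bkap B U h \<otimes>\<^bsub>bE B U\<^esub> biot B U g
      = bkap B U h \<otimes>\<^bsub>bE B U\<^esub> (inv\<^bsub>bE B U\<^esub> bkap B U h \<otimes>\<^bsub>bE B U\<^esub> biot B U g \<otimes>\<^bsub>bE B U\<^esub> bkap B U h)"
    by simp
  also have "\<dots> = biot B U g \<otimes>\<^bsub>bE B U\<^esub> bkap B U h"
    using k i by (simp add: E.m_assoc flip: E.m_assoc[of "bkap B U h" "inv\<^bsub>bE B U\<^esub> bkap B U h"])
  finally show ?thesis .
qed

lemma butterfly_braiding_identity:
  assumes "U \<in> Obj C" and "a \<in> carrier (bE B U)" and "c \<in> carrier (bE B U)"
  shows "bkap B U (xbr H U (bpi B U a) (bpi B U c)) \<otimes>\<^bsub>bE B U\<^esub> biot B U (xbr G U (bj B U a) (bj B U c))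
           = inv\<^bsub>bE B U\<^esub> c \<otimes>\<^bsub>bE B U\<^esub> inv\<^bsub>bE B U\<^esub> a \<otimes>\<^bsub>bE B U\<^esub> c \<otimes>\<^bsub>bE B U\<^esub> a"
  using braided_B assms unfolding is_braided_butterfly_def by auto

lemma butterfly_braiding_square:
  assumes U: "U \<in> Obj C" and a: "a \<in> carrier (bE B U)" and c: "c \<in> carrier (bE B U)"
  shows "bkap B U (braiding_square H U (bpi B U a) (bpi B U c))
           \<otimes>\<^bsub>bE B U\<^esub> biot B U (braiding_square G U (bj B U a) (bj B U c)) = \<one>\<^bsub>bE B U\<^esub>"
proof -
  interpret E: group "bE B U" using butterfly_group[OF U] .
  define k1 k2 i1 i2 where
    "k1 = bkap B U (xbr H U (bpi B U a) (bpi B U c))" and "k2 = bkap B U (xbr H U (bpi B U c) (bpi B U a))"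
    and "i1 = biot B U (xbr G U (bj B U a) (bj B U c))" and "i2 = biot B U (xbr G U (bj B U c) (bj B U a))"
  have carr: "k1 \<in> carrier (bE B U)" "k2 \<in> carrier (bE B U)" "i1 \<in> carrier (bE B U)" "i2 \<in> carrier (bE B U)"
    unfolding k1_def k2_def i1_def i2_def
    using butterfly_carriers[OF U] braiding_closed[OF site braided_H U] braiding_closed[OF site braided_G U] a c
    by auto
  have "bkap B U (braiding_square H U (bpi B U a) (bpi B U c)) = k1 \<otimes>\<^bsub>bE B U\<^esub> k2"
    "biot B U (braiding_square G U (bj B U a) (bj B U c)) = i1 \<otimes>\<^bsub>bE B U\<^esub> i2"
    unfolding braiding_square_def k1_def k2_def i1_def i2_def
    using hom_mult butterfly_homs[OF U] butterfly_carriers[OF U] a c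
      braiding_closed[OF site braided_H U] braiding_closed[OF site braided_G U] by metis+
  moreover have "k2 \<otimes>\<^bsub>bE B U\<^esub> i1 = i1 \<otimes>\<^bsub>bE B U\<^esub> k2"
    unfolding k2_def i1_def
    using butterfly_kappa_iota_commute[OF U] butterfly_carriers[OF U] a c
      braiding_closed[OF site braided_H U] braiding_closed[OF site braided_G U] by auto
  ultimately have "bkap B U (braiding_square H U (bpi B U a) (bpi B U c))
      \<otimes>\<^bsub>bE B U\<^esub> biot B U (braiding_square G U (bj B U a) (bj B U c))
      = (k1 \<otimes>\<^bsub>bE B U\<^esub> i1) \<otimes>\<^bsub>bE B U\<^esub> (k2 \<otimes>\<^bsub>bE B U\<^esub> i2)"
    using carr by (simp add: E.m_assoc flip: E.m_assoc[of k2 i1])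
  also have "\<dots> = \<one>\<^bsub>bE B U\<^esub>"
    unfolding k1_def k2_def i1_def i2_def
    using butterfly_braiding_identity[OF U a c] butterfly_braiding_identity[OF U c a]
      E.swapped_commutators_mult[OF a c] by simp
  finally show ?thesis .
qed

lemma butterfly_braiding_diagonal:
  assumes U: "U \<in> Obj C" and a: "a \<in> carrier (bE B U)"
  shows "bkap B U (xbr H U (bpi B U a) (bpi B U a))
           \<otimes>\<^bsub>bE B U\<^esub> biot B U (xbr G U (bj B U a) (bj B U a)) = \<one>\<^bsub>bE B U\<^esub>"
proof -
  interpret E: group "bE B U" using butterfly_group[OF U] .
  show ?thesis using butterfly_braiding_identity[OF U a a] a
    by (simp add: E.m_assoc flip: E.m_assoc[of "inv\<^bsub>bE B U\<^esub> a" a])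
qed

lemma butterfly_iota_inj: "U \<in> Obj C \<Longrightarrow> inj_on (biot B U) (carrier (xG1 G U))"
  using butterfly unfolding is_butterfly_def sheaf_mono_def by auto

lemma butterfly_cancel:
  assumes U: "U \<in> Obj C" and x: "x \<in> carrier (xG1 H U)" and y: "y \<in> carrier (xG1 G U)"
    and prod: "bkap B U x \<otimes>\<^bsub>bE B U\<^esub> biot B U y = \<one>\<^bsub>bE B U\<^esub>"
  shows "x = \<one>\<^bsub>xG1 H U\<^esub> \<Longrightarrow> y = \<one>\<^bsub>xG1 G U\<^esub>"
    and "y = \<one>\<^bsub>xG1 G U\<^esub> \<Longrightarrow> sheaf_mono C (xG1 H) (bkap B) \<Longrightarrow> x = \<one>\<^bsub>xG1 H U\<^esub>"
  using hom_images_mult_eq_one_cancel[OF butterfly_group[OF U]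
      braided_xmod_group1[OF site braided_H U] braided_xmod_group1[OF site braided_G U]
      butterfly_homs(1,2)[OF U] x y prod] butterfly_iota_inj[OF U] U
  unfolding sheaf_mono_def by auto

lemma braiding_square_transfer:
  assumes U: "U \<in> Obj C" and a: "a \<in> carrier (bE B U)" and c: "c \<in> carrier (bE B U)"
  shows "symmetric_xmod C H \<Longrightarrow> braiding_square G U (bj B U a) (bj B U c) = \<one>\<^bsub>xG1 G U\<^esub>"
    and "symmetric_xmod C G \<Longrightarrow> sheaf_mono C (xG1 H) (bkap B) \<Longrightarrow>
           braiding_square H U (bpi B U a) (bpi B U c) = \<one>\<^bsub>xG1 H U\<^esub>"
proof -
  have H_pi: "braiding_square H U (bpi B U a) (bpi B U c) \<in> carrier (xG1 H U)"
    and G_j: "braiding_square G U (bj B U a) (bj B U c) \<in> carrier (xG1 G U)"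
    using braiding_square_closed[OF site braided_H U] braiding_square_closed[OF site braided_G U]
      butterfly_carriers[OF U] a c by auto
  note cancel = butterfly_cancel[OF U H_pi G_j butterfly_braiding_square[OF U a c]]
  show "braiding_square G U (bj B U a) (bj B U c) = \<one>\<^bsub>xG1 G U\<^esub>" if "symmetric_xmod C H"
    using cancel(1) that U butterfly_carriers(3)[OF U] a c
    unfolding symmetric_xmod_iff_braiding_square by blast
  show "braiding_square H U (bpi B U a) (bpi B U c) = \<one>\<^bsub>xG1 H U\<^esub>"
    if "symmetric_xmod C G" and "sheaf_mono C (xG1 H) (bkap B)"
    using cancel(2) that U butterfly_carriers(4)[OF U] a c
    unfolding symmetric_xmod_iff_braiding_square by blast
qed

lemma braiding_diagonal_transfer:
  assumes U: "U \<in> Obj C" and a: "a \<in> carrier (bE B U)"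
  shows "picard_xmod C H \<Longrightarrow> xbr G U (bj B U a) (bj B U a) = \<one>\<^bsub>xG1 G U\<^esub>"
    and "picard_xmod C G \<Longrightarrow> sheaf_mono C (xG1 H) (bkap B) \<Longrightarrow>
           xbr H U (bpi B U a) (bpi B U a) = \<one>\<^bsub>xG1 H U\<^esub>"
proof -
  have H_pi: "xbr H U (bpi B U a) (bpi B U a) \<in> carrier (xG1 H U)"
    and G_j: "xbr G U (bj B U a) (bj B U a) \<in> carrier (xG1 G U)"
    using braiding_closed[OF site braided_H U] braiding_closed[OF site braided_G U]
      butterfly_carriers[OF U] a by auto
  note cancel = butterfly_cancel[OF U H_pi G_j butterfly_braiding_diagonal[OF U a]]
  show "xbr G U (bj B U a) (bj B U a) = \<one>\<^bsub>xG1 G U\<^esub>" if "picard_xmod C H"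
    using cancel(1) that U butterfly_carriers(3)[OF U] a unfolding picard_xmod_iff by blast
  show "xbr H U (bpi B U a) (bpi B U a) = \<one>\<^bsub>xG1 H U\<^esub>"
    if "picard_xmod C G" and "sheaf_mono C (xG1 H) (bkap B)"
    using cancel(2) that U butterfly_carriers(4)[OF U] a unfolding picard_xmod_iff by blast
qed

end

theorem lemma7p4p6:
  fixes C :: "('o,'m) site_data"
    and H :: "('o,'m,'h1,'h0) xmod"
    and G :: "('o,'m,'g1,'g0) xmod"
    and B :: "('o,'m,'e,'h1,'h0,'g1,'g0) butterfly"
  assumes "is_site C" and "subcanonical C"
    and "braided_crossed_module C H" and "braided_crossed_module C G"
    and "is_braided_butterfly C H G B"
  shows "(sheaf_epi C (bE B) (xG0 G) (xr0 G) (bj B) \<longrightarrow>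
            (symmetric_xmod C H \<longrightarrow> symmetric_xmod C G) \<and>
            (picard_xmod C H \<longrightarrow> picard_xmod C G))
       \<and> (sheaf_mono C (xG1 H) (bkap B) \<longrightarrow>
            (symmetric_xmod C G \<longrightarrow> symmetric_xmod C H) \<and>
            (picard_xmod C G \<longrightarrow> picard_xmod C H))"
proof -
  note site = assms(1) and bH = assms(3) and bG = assms(4) and bB = assms(5)
  note E = butterfly_sheaf_maps[OF site bH bG bB]
  note square = braiding_square_transfer[OF site bH bG bB]
    and diagonal = braiding_diagonal_transfer[OF site bH bG bB]
  have G_sym: "symmetric_xmod C G"
    if j_epi: "sheaf_epi C (bE B) (xG0 G) (xr0 G) (bj B)" and "symmetric_xmod C H"
    using symmetric_xmod_if_braiding_square_one_on_image[OF site bG E(1,3) j_epi] square(1) that(2)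
    by blast
  have G_diagonal: "\<forall>U\<in>Obj C. \<forall>x\<in>carrier (xG0 G U). xbr G U x x = \<one>\<^bsub>xG1 G U\<^esub>"
    if j_epi: "sheaf_epi C (bE B) (xG0 G) (xr0 G) (bj B)" and "picard_xmod C H"
    using braiding_diagonal_one_if_one_on_image[OF site bG j_epi] diagonal(1) that(2) by blast
  have H_sym: "symmetric_xmod C H"
    if "sheaf_mono C (xG1 H) (bkap B)" and "symmetric_xmod C G"
    using symmetric_xmod_if_braiding_square_one_on_image[OF site bH E(1,2,4)] square(2) that
    by blast
  have H_diagonal: "\<forall>U\<in>Obj C. \<forall>x\<in>carrier (xG0 H U). xbr H U x x = \<one>\<^bsub>xG1 H U\<^esub>"
    if "sheaf_mono C (xG1 H) (bkap B)" and "picard_xmod C G"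
    using braiding_diagonal_one_if_one_on_image[OF site bH E(4)] diagonal(2) that by blast
  show ?thesis
    using G_sym G_diagonal H_sym H_diagonal
    unfolding picard_xmod_iff[of C G] picard_xmod_iff[of C H] by blast
qed

end
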